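(* Let $H \in \mathcal{M}_n(\mathbb{C})$ be a positive semidefinite matrix whose least eigenvalue is simple. Then $H$ has exactly $k$ distinct eigenvalues, where $2 \le k \le n$, if and only if there are $k$ distinct real numbers $\mu_1, \ldots, \mu_k$ such that (i) $H - \mu_i I$ is a singular matrix for every $1 \le i \le k-1$; and (ii) $\prod_{i=1}^{k-1}(H - \mu_i I) = \frac{\prod_{i=1}^{k-1}(\mu_k - \mu_i)}{\|\alpha\|_2^2}\,\alpha\alpha^\ast$ and $H\alpha = \mu_k\alpha$ for some $\alpha \in \mathbb{C}^n\setminus\{\mathbf{0}\}$. Moreover, in this case $\mu_1, \ldots, \mu_k$ are exactly the $k$ distinct eigenvalues of $H$.
   Context: $\mathcal{M}_n(\mathbb{C})$ is the set of $n\times n$ complex matrices, $I$ the identity matrix, $\alpha^\ast = \overline{\alpha}^T$ and $\|\alpha\|_2^2 = \alpha^\ast\alpha$. A simple eigenvalue is one of algebraic multiplicity $1$. *)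

theory Defs
  imports "Jordan_Normal_Form.Jordan_Normal_Form" "Jordan_Normal_Form.Schur_Decomposition"
begin

definition psd_mat :: "complex mat \<Rightarrow> nat \<Rightarrow> bool" where
  "psd_mat H n \<longleftrightarrow> H \<in> carrier_mat n n \<and> mat_adjoint H = H \<and>
     (\<forall>x \<in> carrier_vec n. Im ((H *\<^sub>v x) \<bullet>c x) = 0 \<and> Re ((H *\<^sub>v x) \<bullet>c x) \<ge> 0)"

definition simple_eigenvalue :: "complex mat \<Rightarrow> complex \<Rightarrow> bool" where
  "simple_eigenvalue H l \<longleftrightarrow> eigenvalue H l \<and> Polynomial.order l (char_poly H) = 1"

text \<open>The least eigenvalue of a Hermitian matrix (eigenvalues are real) is simple.\<close>
definition least_eigenvalue_simple :: "complex mat \<Rightarrow> bool" where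
  "least_eigenvalue_simple H \<longleftrightarrow>
     (\<exists>l. eigenvalue H l \<and> (\<forall>m. eigenvalue H m \<longrightarrow> Re l \<le> Re m) \<and> simple_eigenvalue H l)"

definition mat_list_prod :: "nat \<Rightarrow> complex mat list \<Rightarrow> complex mat" where
  "mat_list_prod n Ms = foldr (*) Ms (1\<^sub>m n)"

definition outer_adj :: "complex vec \<Rightarrow> complex mat" where
  "outer_adj a = mat (dim_vec a) (dim_vec a) (\<lambda>(i,j). a $ i * cnj (a $ j))"

end

theory Submission
  imports Defs
    "Jordan_Normal_Form.Jordan_Normal_Form_Existence"
    "Jordan_Normal_Form.Jordan_Normal_Form_Uniqueness"
begin

text \<open>A Hermitian matrix \<open>H\<close> is diagonalisable with real eigenvalues, and eigenvectors for
  distinct eigenvalues are orthogonal. If \<open>\<mu>\<^sub>k\<close> is the simple eigenvalue and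
  \<open>\<mu>\<^sub>1, \<dots>, \<mu>\<^sub>k\<^sub>-\<^sub>1\<close> are the others, then \<open>\<Prod>(H - \<mu>\<^sub>i I)\<close> annihilates every
  eigenvector except those in the one-dimensional \<open>\<mu>\<^sub>k\<close>-eigenspace spanned by \<open>\<alpha>\<close>, on which it
  acts as \<open>\<Prod>(\<mu>\<^sub>k - \<mu>\<^sub>i)\<close>; hence it is that scalar times the orthogonal projection
  \<open>\<alpha>\<alpha>\<^sup>*/\<parallel>\<alpha>\<parallel>\<^sup>2\<close>. Conversely, if the product is a multiple of \<open>\<alpha>\<alpha>\<^sup>*\<close> with
  \<open>H\<alpha> = \<mu>\<^sub>k\<alpha>\<close>, an eigenvector \<open>v\<close> for any eigenvalue \<open>m \<noteq> \<mu>\<^sub>k\<close> is orthogonal to \<open>\<alpha>\<close> and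
  therefore killed by the product, while the product also scales \<open>v\<close> by \<open>\<Prod>(m - \<mu>\<^sub>i)\<close>;
  so \<open>m\<close> is one of the \<open>\<mu>\<^sub>i\<close>.\<close>

section \<open>Hermitian matrices\<close>

definition hermitian_mat :: "complex mat \<Rightarrow> bool" where
  "hermitian_mat A \<longleftrightarrow> (\<forall>i < dim_row A. \<forall>j < dim_row A. A $$ (i, j) = cnj (A $$ (j, i)))"

lemma hermitian_matD:
  "hermitian_mat A \<Longrightarrow> i < dim_row A \<Longrightarrow> j < dim_row A \<Longrightarrow> A $$ (i, j) = cnj (A $$ (j, i))"
  unfolding hermitian_mat_def by blast

lemma hermitian_mat_if_adjoint_eq:
  assumes A: "A \<in> carrier_mat n n" and adj: "mat_adjoint A = A"
  shows "hermitian_mat A"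
  unfolding hermitian_mat_def
proof (intro allI impI)
  fix i j assume "i < dim_row A" "j < dim_row A"
  then have "mat_adjoint A $$ (i, j) = cnj (A $$ (j, i))"
    using A unfolding mat_adjoint_def by (simp add: mat_of_rows_def)
  then show "A $$ (i, j) = cnj (A $$ (j, i))" using adj by simp
qed

lemma hermitian_mat_inner_commute:
  assumes A: "A \<in> carrier_mat n n" and herm: "hermitian_mat A"
    and x: "x \<in> carrier_vec n" and y: "y \<in> carrier_vec n"
  shows "(A *\<^sub>v x) \<bullet>c y = x \<bullet>c (A *\<^sub>v y)"
proof -
  have "(A *\<^sub>v x) \<bullet>c y = (\<Sum>i<n. (\<Sum>j<n. A $$ (i, j) * x $ j) * cnj (y $ i))"
    using A x y by (simp add: scalar_prod_def mult_mat_vec_def row_def lessThan_atLeast0)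
  also have "\<dots> = (\<Sum>i<n. \<Sum>j<n. A $$ (i, j) * x $ j * cnj (y $ i))"
    by (simp add: sum_distrib_right)
  also have "\<dots> = (\<Sum>j<n. \<Sum>i<n. x $ j * cnj (A $$ (j, i) * y $ i))"
  proof (subst sum.swap, intro sum.cong refl)
    fix i j assume "i \<in> {..<n}" "j \<in> {..<n}"
    then have "A $$ (j, i) = cnj (A $$ (i, j))" using A by (intro hermitian_matD[OF herm]) auto
    then show "A $$ (i, j) * x $ j * cnj (y $ i) = x $ j * cnj (A $$ (j, i) * y $ i)" by simp
  qed
  also have "\<dots> = (\<Sum>j<n. x $ j * cnj (\<Sum>i<n. A $$ (j, i) * y $ i))"
    by (simp add: sum_distrib_left)
  also have "\<dots> = x \<bullet>c (A *\<^sub>v y)"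
    using A x y by (simp add: scalar_prod_def mult_mat_vec_def row_def lessThan_atLeast0)
  finally show ?thesis .
qed

lemma hermitian_mat_eigenvalue_real:
  assumes A: "A \<in> carrier_mat n n" and herm: "hermitian_mat A" and ev: "eigenvalue A e"
  shows "e \<in> \<real>"
proof -
  obtain v where v: "v \<in> carrier_vec n" "v \<noteq> 0\<^sub>v n" and Av: "A *\<^sub>v v = e \<cdot>\<^sub>v v"
    using ev A unfolding eigenvalue_def eigenvector_def by auto
  have "e * (v \<bullet>c v) = (A *\<^sub>v v) \<bullet>c v"
    using v Av by (simp add: scalar_prod_def sum_distrib_left mult_ac)
  also have "\<dots> = v \<bullet>c (A *\<^sub>v v)" by (rule hermitian_mat_inner_commute[OF A herm v(1) v(1)])
  also have "\<dots> = cnj e * (v \<bullet>c v)"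
    using v Av by (simp add: scalar_prod_def sum_distrib_left mult_ac)
  finally have "cnj e = e" using v by simp
  then show ?thesis by (simp add: Reals_cnj_iff)
qed

lemma hermitian_mat_eigenvectors_orthogonal:
  assumes A: "A \<in> carrier_mat n n" and herm: "hermitian_mat A"
    and v: "v \<in> carrier_vec n" and Av: "A *\<^sub>v v = a \<cdot>\<^sub>v v"
    and w: "w \<in> carrier_vec n" and Aw: "A *\<^sub>v w = b \<cdot>\<^sub>v w"
    and b: "b \<in> \<real>" and ab: "a \<noteq> b"
  shows "v \<bullet>c w = 0"
proof -
  have "a * (v \<bullet>c w) = (A *\<^sub>v v) \<bullet>c w"
    using v w Av by (simp add: scalar_prod_def sum_distrib_left mult_ac)
  also have "\<dots> = v \<bullet>c (A *\<^sub>v w)" by (rule hermitian_mat_inner_commute[OF A herm v w])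
  also have "\<dots> = b * (v \<bullet>c w)"
    using v w Aw b by (simp add: scalar_prod_def sum_distrib_left mult_ac Reals_cnj_iff)
  finally show ?thesis using ab by simp
qed

lemma hermitian_mat_char_matrix:
  assumes A: "A \<in> carrier_mat n n" and herm: "hermitian_mat A" and e: "e \<in> \<real>"
  shows "hermitian_mat (char_matrix A e)"
  unfolding hermitian_mat_def
proof (intro allI impI)
  fix i j assume "i < dim_row (char_matrix A e)" "j < dim_row (char_matrix A e)"
  moreover from this have "i < n" "j < n" using char_matrix_closed[OF A, of e] by auto
  moreover from this have "A $$ (i, j) = cnj (A $$ (j, i))"
    using A by (intro hermitian_matD[OF herm]) auto
  ultimately show "char_matrix A e $$ (i, j) = cnj (char_matrix A e $$ (j, i))"
    using A e by (auto simp: char_matrix_def Reals_cnj_iff)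
qed

lemma hermitian_mat_kernel_square:
  assumes M: "M \<in> carrier_mat n n" and herm: "hermitian_mat M"
  shows "mat_kernel (M * M) = mat_kernel M"
proof -
  have "M *\<^sub>v v = 0\<^sub>v n" if v: "v \<in> carrier_vec n" and MMv: "M *\<^sub>v (M *\<^sub>v v) = 0\<^sub>v n" for v
  proof -
    have Mv: "M *\<^sub>v v \<in> carrier_vec n" using M v by simp
    have "(M *\<^sub>v v) \<bullet>c (M *\<^sub>v v) = (M *\<^sub>v (M *\<^sub>v v)) \<bullet>c v"
      by (rule hermitian_mat_inner_commute[OF M herm Mv v, symmetric])
    then have "(M *\<^sub>v v) \<bullet>c (M *\<^sub>v v) = 0" using MMv v by simp
    then show ?thesis using Mv by simp
  qed
  moreover have "M *\<^sub>v (M *\<^sub>v v) = 0\<^sub>v n" if "M *\<^sub>v v = 0\<^sub>v n" for v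
    using M that by (auto intro!: eq_vecI)
  ultimately show ?thesis
    using M unfolding mat_kernel[OF mult_carrier_mat[OF M M]] mat_kernel[OF M]
    by (auto simp: assoc_mult_mat_vec[OF M M])
qed

text \<open>Since \<open>ker (A - e I)\<^sup>2 = ker (A - e I)\<close>, the generalised eigenspaces of order two
  and one coincide, which leaves no room for a Jordan block of size two or more.\<close>

lemma hermitian_mat_jordan_blocks_trivial:
  assumes A: "A \<in> carrier_mat n n" and herm: "hermitian_mat A" and jnf: "jordan_nf A n_as"
  shows "\<forall>(m, e) \<in> set n_as. m = 1"
proof (intro ballI, clarify)
  fix m e assume block: "(m, e) \<in> set n_as"
  have "m \<noteq> 0" using jnf block unfolding jordan_nf_def by force
  then have "poly (char_poly A) e = 0"
    using block unfolding jordan_nf_char_poly[OF jnf]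
    by (auto simp: poly_prod_list prod_list_zero_iff poly_power intro!: image_eqI[of _ _ "(m, e)"])
  then have "e \<in> \<real>"
    using hermitian_mat_eigenvalue_real[OF A herm] eigenvalue_root_char_poly[OF A] by blast
  then have M: "mat_kernel (char_matrix A e ^\<^sub>m 2) = mat_kernel (char_matrix A e ^\<^sub>m 1)"
    using hermitian_mat_kernel_square[OF char_matrix_closed[OF A] hermitian_mat_char_matrix[OF A herm]] A
    by (simp add: numeral_2_eq_2)
  have "dim_gen_eigenspace A e 2 = dim_gen_eigenspace A e 1"
    unfolding dim_gen_eigenspace_def kernel_dim_def M using A by simp
  then have "sum_list (map (min 2) (map fst [(m, e') \<leftarrow> n_as. e' = e]))
      = sum_list (map (min 1) (map fst [(m, e') \<leftarrow> n_as. e' = e]))"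
    unfolding dim_gen_eigenspace[OF jnf] .
  moreover have "m \<in> set (map fst [(m, e') \<leftarrow> n_as. e' = e])" using block by force
  ultimately have "min 2 m + sum_list (map (min 2) (remove1 m (map fst [(m, e') \<leftarrow> n_as. e' = e])))
      = min 1 m + sum_list (map (min 1) (remove1 m (map fst [(m, e') \<leftarrow> n_as. e' = e])))"
    by (simp only: sum_list_map_remove1)
  moreover have "sum_list (map (min 1) (remove1 m (map fst [(m, e') \<leftarrow> n_as. e' = e])))
      \<le> sum_list (map (min 2) (remove1 m (map fst [(m, e') \<leftarrow> n_as. e' = e])))"
    by (intro sum_list_mono) simp
  ultimately show "m = 1" using \<open>m \<noteq> 0\<close> by linarith
qed

lemma jordan_matrix_trivial_blocks:
  assumes "\<forall>(m, e) \<in> set n_as. m = 1"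
  shows "jordan_matrix n_as = mat_diag (length n_as) (\<lambda>i. snd (n_as ! i))"
  using assms
proof (induction n_as)
  case Nil
  show ?case by (rule eq_matI) (auto simp: mat_diag_def)
next
  case (Cons block n_as)
  obtain e where block: "block = (1, e)" using Cons.prems by auto
  have IH: "jordan_matrix n_as = mat_diag (length n_as) (\<lambda>i. snd (n_as ! i))"
    using Cons by simp
  have "sum_list (map fst n_as) = length n_as"
    using Cons.prems by (induction n_as) auto
  then show ?case
    unfolding block jordan_matrix_Cons IH by (intro eq_matI) (auto simp: mat_diag_def nth_Cons')
qed

lemma hermitian_mat_diagonalizable:
  assumes A: "A \<in> carrier_mat n n" and herm: "hermitian_mat A"
  shows "\<exists>d P Q. similar_mat_wit A (mat_diag n d) P Q"
proof -
  obtain as where "char_poly A = (\<Prod>a \<leftarrow> as. [:- a, 1:])" using char_poly_factorized[OF A] by blast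
  then obtain n_as where jnf: "jordan_nf A n_as" using jordan_nf_exists[OF A] by blast
  then obtain P Q where sim: "similar_mat_wit A (jordan_matrix n_as) P Q"
    unfolding jordan_nf_def similar_mat_def by blast
  have J: "jordan_matrix n_as = mat_diag (length n_as) (\<lambda>i. snd (n_as ! i))"
    by (rule jordan_matrix_trivial_blocks[OF hermitian_mat_jordan_blocks_trivial[OF A herm jnf]])
  moreover have "length n_as = n" using similar_mat_witD2(5)[OF A sim] unfolding J mat_diag_def by auto
  ultimately show ?thesis using sim by metis
qed

section \<open>Matrices similar to a diagonal matrix\<close>

lemma finite_eigenvalues:
  assumes A: "(A :: 'a :: field mat) \<in> carrier_mat n n"
  shows "finite {e. eigenvalue A e}"
proof -
  have "char_poly A \<noteq> 0" using degree_monic_char_poly[OF A] by auto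
  then show ?thesis unfolding eigenvalue_root_char_poly[OF A] by (rule poly_roots_finite)
qed

lemma char_poly_similar_mat_diag:
  assumes "similar_mat_wit A (mat_diag n d) P Q"
  shows "char_poly A = (\<Prod>i \<leftarrow> [0..<n]. [:- d i, 1:])"
proof -
  have "upper_triangular (mat_diag n d)" by (simp add: upper_triangular_def mat_diag_def)
  moreover have "diag_mat (mat_diag n d) = map d [0..<n]"
    by (simp add: diag_mat_def mat_diag_def)
  moreover have "similar_mat A (mat_diag n d)" using assms unfolding similar_mat_def by blast
  ultimately show ?thesis
    by (simp add: char_poly_similar char_poly_upper_triangular[OF mat_diag_dim] comp_def)
qed

lemma order_prod_linear_factors:
  "Polynomial.order a (\<Prod>x \<leftarrow> xs. [:- f x, 1:]) = length (filter (\<lambda>x. f x = a) xs)"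
proof (induction xs)
  case (Cons x xs)
  have nz: "[:- f x, 1:] * (\<Prod>y \<leftarrow> xs. [:- f y, 1:]) \<noteq> 0"
    by (rule no_zero_divisors) (auto simp: prod_list_zero_iff)
  show ?case by (simp only: list.map prod_list.Cons order_mult[OF nz] Cons.IH) (simp add: order_linear')
qed simp

lemma simple_eigenvalue_mat_diag_index:
  assumes sim: "similar_mat_wit A (mat_diag n d) P Q"
    and simple: "Polynomial.order l (char_poly A) = 1"
  obtains j0 where "j0 < n" "d j0 = l" "\<And>j. j < n \<Longrightarrow> d j = l \<Longrightarrow> j = j0"
proof -
  have "length (filter (\<lambda>j. d j = l) [0..<n]) = 1"
    using simple unfolding char_poly_similar_mat_diag[OF sim] order_prod_linear_factors .
  then obtain j0 where "filter (\<lambda>j. d j = l) [0..<n] = [j0]" by (auto simp: length_Suc_conv)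
  then have "\<forall>j. j \<in> set (filter (\<lambda>j. d j = l) [0..<n]) \<longleftrightarrow> j = j0" by simp
  then have "\<forall>j. j < n \<and> d j = l \<longleftrightarrow> j = j0" by simp
  then show ?thesis using that by blast
qed

lemma similar_mat_diag_col_eigenvector:
  assumes A: "A \<in> carrier_mat n n" and sim: "similar_mat_wit A (mat_diag n d) P Q" and j: "j < n"
  shows "eigenvector A (col P j) (d j)"
proof -
  note wit = similar_mat_witD2[OF A sim]
  have "A * P = P * mat_diag n d * (Q * P)"
    unfolding wit(3) by (rule assoc_mult_mat[OF mult_carrier_mat[OF wit(6) mat_diag_dim] wit(7) wit(6)])
  also have "\<dots> = mat n n (\<lambda>(i, j). P $$ (i, j) * d j)"
    using wit by (simp add: mat_diag_mult_right)
  finally have AP: "A * P = mat n n (\<lambda>(i, j). P $$ (i, j) * d j)" .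
  have "A *\<^sub>v col P j = col (A * P) j" by (rule col_mult2[OF A wit(6) j, symmetric])
  also have "\<dots> = d j \<cdot>\<^sub>v col P j" unfolding AP using wit j by (intro eq_vecI) auto
  finally have "A *\<^sub>v col P j = d j \<cdot>\<^sub>v col P j" .
  moreover have "col P j \<noteq> 0\<^sub>v n"
  proof
    assume "col P j = 0\<^sub>v n"
    then have "(Q *\<^sub>v col P j) $ j = 0" using wit j by (simp add: scalar_prod_def)
    moreover have "Q *\<^sub>v col P j = unit_vec n j"
      using wit j col_mult2[of Q n n P n j] by simp
    ultimately show False using j by simp
  qed
  ultimately show ?thesis using wit j unfolding eigenvector_def by auto
qed

lemma mat_eq_if_eq_on_invertible_cols:
  fixes A B P Q :: "'a :: semiring_1 mat"
  assumes A: "A \<in> carrier_mat m n" and B: "B \<in> carrier_mat m n"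
    and P: "P \<in> carrier_mat n n" and Q: "Q \<in> carrier_mat n n" and PQ: "P * Q = 1\<^sub>m n"
    and cols: "\<And>j. j < n \<Longrightarrow> A *\<^sub>v col P j = B *\<^sub>v col P j"
  shows "A = B"
proof -
  have "A * P = B * P"
  proof (rule mat_col_eqI)
    fix j assume "j < dim_col (B * P)"
    then have j: "j < n" using P by simp
    show "col (A * P) j = col (B * P) j"
      unfolding col_mult2[OF A P j] col_mult2[OF B P j] by (rule cols[OF j])
  qed (use A B P in simp_all)
  then have "A * P * Q = B * P * Q" by simp
  then show ?thesis
    using A B P Q PQ
    by (simp add: assoc_mult_mat[of _ m n _ n _ n] right_mult_one_mat[OF A] right_mult_one_mat[OF B])
qed

section \<open>Products of shifted matrices\<close>

lemma char_matrix_eq_shift: "A \<in> carrier_mat n n \<Longrightarrow> char_matrix A e = A - e \<cdot>\<^sub>m 1\<^sub>m n"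
  by (auto simp: char_matrix_def intro!: eq_matI)

lemma smult_mat_mult_vec:
  fixes A :: "'a :: comm_ring mat"
  assumes A: "A \<in> carrier_mat nr nc" and v: "v \<in> carrier_vec nc"
  shows "(c \<cdot>\<^sub>m A) *\<^sub>v v = c \<cdot>\<^sub>v (A *\<^sub>v v)"
proof (rule eq_vecI)
  fix i assume "i < dim_vec (c \<cdot>\<^sub>v (A *\<^sub>v v))"
  then show "((c \<cdot>\<^sub>m A) *\<^sub>v v) $ i = (c \<cdot>\<^sub>v (A *\<^sub>v v)) $ i"
    using A v by (simp add: smult_scalar_prod_distrib[of _ nc])
qed (use A in simp)

lemma shift_mult_eigenvector:
  fixes A :: "'a :: comm_ring_1 mat"
  assumes A: "A \<in> carrier_mat n n" and v: "v \<in> carrier_vec n" and Av: "A *\<^sub>v v = l \<cdot>\<^sub>v v"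
  shows "(A - c \<cdot>\<^sub>m 1\<^sub>m n) *\<^sub>v v = (l - c) \<cdot>\<^sub>v v"
proof -
  have "(A - c \<cdot>\<^sub>m 1\<^sub>m n) *\<^sub>v v = A *\<^sub>v v - (c \<cdot>\<^sub>m 1\<^sub>m n) *\<^sub>v v"
    by (rule minus_mult_distrib_mat_vec[OF A _ v]) simp
  also have "\<dots> = l \<cdot>\<^sub>v v - c \<cdot>\<^sub>v v"
    using v Av by (simp add: smult_mat_mult_vec[of "1\<^sub>m n" n n])
  also have "\<dots> = (l - c) \<cdot>\<^sub>v v" using v by (intro eq_vecI) (auto simp: algebra_simps)
  finally show ?thesis .
qed

lemma mat_list_prod_carrier:
  "(\<And>M. M \<in> set Ms \<Longrightarrow> M \<in> carrier_mat n n) \<Longrightarrow> mat_list_prod n Ms \<in> carrier_mat n n"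
  unfolding mat_list_prod_def by (induction Ms) (fastforce intro: mult_carrier_mat)+

lemma mat_list_prod_shifts_mult_eigenvector:
  fixes A :: "complex mat"
  assumes A: "A \<in> carrier_mat n n" and v: "v \<in> carrier_vec n" and Av: "A *\<^sub>v v = l \<cdot>\<^sub>v v"
  shows "mat_list_prod n (map (\<lambda>i. A - f i \<cdot>\<^sub>m 1\<^sub>m n) xs) *\<^sub>v v = (\<Prod>i \<leftarrow> xs. l - f i) \<cdot>\<^sub>v v"
proof (induction xs)
  case Nil
  show ?case using v by (simp add: mat_list_prod_def)
next
  case (Cons x xs)
  have X: "A - f x \<cdot>\<^sub>m 1\<^sub>m n \<in> carrier_mat n n" by (simp add: minus_carrier_mat)
  have "mat_list_prod n (map (\<lambda>i. A - f i \<cdot>\<^sub>m 1\<^sub>m n) xs) \<in> carrier_mat n n"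
    using A by (intro mat_list_prod_carrier) auto
  then have "mat_list_prod n (map (\<lambda>i. A - f i \<cdot>\<^sub>m 1\<^sub>m n) (x # xs)) *\<^sub>v v
      = (A - f x \<cdot>\<^sub>m 1\<^sub>m n) *\<^sub>v ((\<Prod>i \<leftarrow> xs. l - f i) \<cdot>\<^sub>v v)"
    unfolding mat_list_prod_def using X v by (simp flip: Cons.IH[unfolded mat_list_prod_def])
  also have "\<dots> = (\<Prod>i \<leftarrow> x # xs. l - f i) \<cdot>\<^sub>v v"
    by (simp add: mult_mat_vec[OF X v] shift_mult_eigenvector[OF A v Av] smult_smult_assoc mult.commute)
  finally show ?case .
qed

lemma prod_list_upt_eq_prod: "(\<Prod>i \<leftarrow> [1..<k]. f i) = (\<Prod>i = 1..k-1. f i)"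
proof -
  have "(\<Prod>i \<leftarrow> [1..<k]. f i) = prod f (set [1..<k])" by (rule prod.distinct_set_conv_list[symmetric]) simp
  also have "set [1..<k] = {1..k-1}" by auto
  finally show ?thesis .
qed

lemma outer_adj_carrier: "a \<in> carrier_vec n \<Longrightarrow> outer_adj a \<in> carrier_mat n n"
  by (simp add: outer_adj_def)

lemma outer_adj_mult_vec:
  assumes a: "a \<in> carrier_vec n" and v: "v \<in> carrier_vec n"
  shows "outer_adj a *\<^sub>v v = (v \<bullet>c a) \<cdot>\<^sub>v a"
proof (rule eq_vecI)
  fix i assume "i < dim_vec ((v \<bullet>c a) \<cdot>\<^sub>v a)"
  then show "(outer_adj a *\<^sub>v v) $ i = ((v \<bullet>c a) \<cdot>\<^sub>v a) $ i"
    using a v by (simp add: outer_adj_def scalar_prod_def sum_distrib_left sum_distrib_right mult_ac)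
qed (use a in \<open>simp add: outer_adj_def\<close>)

lemma eigenvalue_mem_shifts_if_shift_prod_rank_one:
  assumes A: "A \<in> carrier_mat n n" and herm: "hermitian_mat A"
    and \<alpha>: "\<alpha> \<in> carrier_vec n" and A\<alpha>: "A *\<^sub>v \<alpha> = a \<cdot>\<^sub>v \<alpha>" and a: "a \<in> \<real>"
    and prod: "mat_list_prod n (map (\<lambda>i. A - f i \<cdot>\<^sub>m 1\<^sub>m n) xs) = C \<cdot>\<^sub>m outer_adj \<alpha>"
    and m: "eigenvalue A m"
  shows "m = a \<or> m \<in> f ` set xs"
proof (cases "m = a")
  case False
  obtain v where v: "v \<in> carrier_vec n" "v \<noteq> 0\<^sub>v n" and Av: "A *\<^sub>v v = m \<cdot>\<^sub>v v"
    using m A unfolding eigenvalue_def eigenvector_def by auto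
  have "v \<bullet>c \<alpha> = 0"
    by (rule hermitian_mat_eigenvectors_orthogonal[OF A herm v(1) Av \<alpha> A\<alpha> a False])
  then have "mat_list_prod n (map (\<lambda>i. A - f i \<cdot>\<^sub>m 1\<^sub>m n) xs) *\<^sub>v v = 0\<^sub>v n"
    unfolding prod smult_mat_mult_vec[OF outer_adj_carrier[OF \<alpha>] v(1)] outer_adj_mult_vec[OF \<alpha> v(1)]
    using \<alpha> by (auto intro!: eq_vecI)
  then have zero: "(\<Prod>i \<leftarrow> xs. m - f i) \<cdot>\<^sub>v v = 0\<^sub>v n"
    unfolding mat_list_prod_shifts_mult_eigenvector[OF A v(1) Av] .
  obtain j where "j < n" "v $ j \<noteq> 0" using v by (metis eq_vecI carrier_vecD index_zero_vec)
  then have "(\<Prod>i \<leftarrow> xs. m - f i) = 0" using arg_cong[OF zero, of "\<lambda>w. w $ j"] v by simp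
  then show ?thesis by (auto simp: prod_list_zero_iff)
qed simp

text \<open>Both sides are compared on the eigenbasis formed by the columns of \<open>P\<close>: the product
  scales \<open>col P j0\<close> by \<open>\<Prod>(l - f i)\<close> and kills every other column, and so does the
  projection, because those columns are eigenvectors for eigenvalues \<open>\<noteq> l\<close> and hence
  orthogonal to \<open>col P j0\<close>.\<close>

lemma mat_list_prod_shifts_eq_outer_adj:
  assumes A: "A \<in> carrier_mat n n" and herm: "hermitian_mat A"
    and sim: "similar_mat_wit A (mat_diag n d) P Q"
    and j0: "j0 < n" "d j0 = l" and unique: "\<And>j. j < n \<Longrightarrow> d j = l \<Longrightarrow> j = j0"
    and l: "l \<in> \<real>" and shifts: "\<And>j. j < n \<Longrightarrow> j \<noteq> j0 \<Longrightarrow> d j \<in> f ` set xs"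
  shows "mat_list_prod n (map (\<lambda>i. A - f i \<cdot>\<^sub>m 1\<^sub>m n) xs)
    = ((\<Prod>i \<leftarrow> xs. l - f i) / (col P j0 \<bullet>c col P j0)) \<cdot>\<^sub>m outer_adj (col P j0)"
    (is "?M = (?c / (?u \<bullet>c ?u)) \<cdot>\<^sub>m outer_adj ?u")
proof -
  note wit = similar_mat_witD2[OF A sim]
  have eigvec: "A *\<^sub>v col P j = d j \<cdot>\<^sub>v col P j" "col P j \<in> carrier_vec n" "col P j \<noteq> 0\<^sub>v n"
    if "j < n" for j
    using similar_mat_diag_col_eigenvector[OF A sim that] A unfolding eigenvector_def by auto
  note u = eigvec[OF j0(1), unfolded j0(2)]
  show ?thesis
  proof (rule mat_eq_if_eq_on_invertible_cols[where m = n, OF _ _ wit(6,7,1)])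
    fix j assume j: "j < n"
    show "?M *\<^sub>v col P j = (?c / (?u \<bullet>c ?u)) \<cdot>\<^sub>m outer_adj ?u *\<^sub>v col P j"
    proof (cases "j = j0")
      case True
      have "?u \<bullet>c ?u \<noteq> 0" using u by simp
      then show ?thesis
        using True u
        by (simp add: mat_list_prod_shifts_mult_eigenvector[OF A] smult_mat_mult_vec[OF outer_adj_carrier]
            outer_adj_mult_vec smult_smult_assoc)
    next
      case False
      then obtain i where "i \<in> set xs" "d j = f i" using shifts[OF j] by blast
      then have zero: "(\<Prod>i \<leftarrow> xs. d j - f i) = 0" by (auto simp: prod_list_zero_iff)
      have orth: "col P j \<bullet>c ?u = 0"
        using hermitian_mat_eigenvectors_orthogonal[OF A herm eigvec(2,1)[OF j] u(2,1) l]
          False unique[OF j] by auto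
      have "?M *\<^sub>v col P j = (\<Prod>i \<leftarrow> xs. d j - f i) \<cdot>\<^sub>v col P j"
        by (rule mat_list_prod_shifts_mult_eigenvector[OF A eigvec(2,1)[OF j]])
      also have "\<dots> = 0\<^sub>v n" unfolding zero using wit(6) by (intro eq_vecI) auto
      also have "\<dots> = (?c / (?u \<bullet>c ?u)) \<cdot>\<^sub>m outer_adj ?u *\<^sub>v col P j"
        using orth u(2) eigvec(2)[OF j] wit(6)
        by (auto simp: smult_mat_mult_vec[OF outer_adj_carrier] outer_adj_mult_vec intro!: eq_vecI)
      finally show ?thesis .
    qed
  qed (use A u in \<open>auto intro!: mat_list_prod_carrier simp: outer_adj_carrier minus_carrier_mat\<close>)
qed

section \<open>The eigenvalue certificate\<close>

text \<open>Conditions (i) and (ii) of the theorem; injectivity of \<open>\<mu>\<close> on \<open>{1..k}\<close> says that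
  \<open>\<mu> 1, \<dots>, \<mu> k\<close> are distinct.\<close>

definition eigenvalue_certificate :: "complex mat \<Rightarrow> nat \<Rightarrow> nat \<Rightarrow> (nat \<Rightarrow> real) \<Rightarrow> bool" where
  "eigenvalue_certificate H n k \<mu> \<longleftrightarrow> inj_on \<mu> {1..k} \<and>
     (\<forall>i \<in> {1..k-1}. det (H - complex_of_real (\<mu> i) \<cdot>\<^sub>m 1\<^sub>m n) = 0) \<and>
     (\<exists>\<alpha> \<in> carrier_vec n. \<alpha> \<noteq> 0\<^sub>v n \<and>
        mat_list_prod n (map (\<lambda>i. H - complex_of_real (\<mu> i) \<cdot>\<^sub>m 1\<^sub>m n) [1..<k])
          = (complex_of_real (\<Prod>i = 1..k-1. \<mu> k - \<mu> i) / (\<alpha> \<bullet>c \<alpha>)) \<cdot>\<^sub>m outer_adj \<alpha>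
        \<and> H *\<^sub>v \<alpha> = complex_of_real (\<mu> k) \<cdot>\<^sub>v \<alpha>)"

lemma eigenvalues_eq_if_certificate:
  assumes A: "A \<in> carrier_mat n n" and herm: "hermitian_mat A"
    and cert: "eigenvalue_certificate A n k \<mu>" and k: "1 \<le> k"
  shows "{m. eigenvalue A m} = (\<lambda>i. complex_of_real (\<mu> i)) ` {1..k}"
proof -
  obtain \<alpha> where \<alpha>: "\<alpha> \<in> carrier_vec n" "\<alpha> \<noteq> 0\<^sub>v n"
    and prod: "mat_list_prod n (map (\<lambda>i. A - complex_of_real (\<mu> i) \<cdot>\<^sub>m 1\<^sub>m n) [1..<k])
          = (complex_of_real (\<Prod>i = 1..k-1. \<mu> k - \<mu> i) / (\<alpha> \<bullet>c \<alpha>)) \<cdot>\<^sub>m outer_adj \<alpha>"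
    and A\<alpha>: "A *\<^sub>v \<alpha> = complex_of_real (\<mu> k) \<cdot>\<^sub>v \<alpha>"
    using cert unfolding eigenvalue_certificate_def by blast
  have "eigenvalue A (complex_of_real (\<mu> i))" if "i \<in> {1..k}" for i
  proof (cases "i = k")
    case True
    then show ?thesis using A \<alpha> A\<alpha> unfolding eigenvalue_def eigenvector_def by auto
  next
    case False
    then show ?thesis
      using that cert A unfolding eigenvalue_certificate_def eigenvalue_det[OF A] char_matrix_eq_shift[OF A]
      by auto
  qed
  moreover have "m \<in> (\<lambda>i. complex_of_real (\<mu> i)) ` {1..k}" if "eigenvalue A m" for m
    using eigenvalue_mem_shifts_if_shift_prod_rank_one[OF A herm \<alpha>(1) A\<alpha> _ prod that] k by force
  ultimately show ?thesis by blast
qed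

lemma card_eigenvalues_if_certificate:
  assumes A: "A \<in> carrier_mat n n" and herm: "hermitian_mat A"
    and cert: "eigenvalue_certificate A n k \<mu>" and k: "1 \<le> k"
  shows "card {m. eigenvalue A m} = k"
proof -
  have inj: "inj_on \<mu> {1..k}" using cert unfolding eigenvalue_certificate_def by blast
  have "inj_on (\<lambda>i. complex_of_real (\<mu> i)) {1..k}"
  proof (rule inj_onI)
    fix i j assume "i \<in> {1..k}" "j \<in> {1..k}" "complex_of_real (\<mu> i) = complex_of_real (\<mu> j)"
    then show "i = j" using inj_onD[OF inj, of i j] by simp
  qed
  then show ?thesis unfolding eigenvalues_eq_if_certificate[OF A herm cert k] by (simp add: card_image)
qed

lemma ex_real_enumeration_with_last:
  fixes S :: "complex set"
  assumes fin: "finite S" and card: "card S = k" and l: "l \<in> S" and real: "S \<subseteq> \<real>"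
  obtains \<mu> :: "nat \<Rightarrow> real" where "inj_on \<mu> {1..k}" "complex_of_real (\<mu> k) = l"
    "(\<lambda>i. complex_of_real (\<mu> i)) ` {1..k-1} = S - {l}"
proof -
  have k: "k \<ge> 1" using fin card l by (auto simp: Suc_le_eq card_gt_0_iff)
  have "finite (S - {l})" "card (S - {l}) = k - 1" using fin card l by (simp_all add: card_Diff_singleton)
  then obtain g where g: "bij_betw g {1..k-1} (S - {l})" using ex_bij_betw_nat_finite_1 by metis
  define \<mu> where "\<mu> i = (if i = k then Re l else Re (g i))" for i
  have "l \<in> \<real>" using l real by blast
  then have \<mu>k: "complex_of_real (\<mu> k) = l" by (simp add: \<mu>_def of_real_Re)
  have \<mu>g: "complex_of_real (\<mu> i) = g i" if i: "i \<in> {1..k-1}" for i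
  proof -
    have "g i \<in> \<real>" using bij_betw_apply[OF g i] real by blast
    moreover have "i \<noteq> k" using i k by auto
    ultimately show ?thesis by (simp add: \<mu>_def of_real_Re)
  qed
  have "(\<lambda>i. complex_of_real (\<mu> i)) ` {1..k-1} = g ` {1..k-1}" by (rule image_cong[OF refl \<mu>g])
  also have "\<dots> = S - {l}" by (rule bij_betw_imp_surj_on[OF g])
  finally have image: "(\<lambda>i. complex_of_real (\<mu> i)) ` {1..k-1} = S - {l}" .
  have "inj_on (\<lambda>i. complex_of_real (\<mu> i)) {1..k-1}"
    using inj_on_cong[of "{1..k-1}" "\<lambda>i. complex_of_real (\<mu> i)" g] \<mu>g g unfolding bij_betw_def by simp
  moreover have "complex_of_real (\<mu> k) \<notin> (\<lambda>i. complex_of_real (\<mu> i)) ` {1..k-1}"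
    unfolding image \<mu>k by simp
  moreover have "{1..k} = insert k {1..k-1}" "{1..k-1} - {k} = {1..k-1}" using k by auto
  ultimately have "inj_on (complex_of_real \<circ> \<mu>) {1..k}" by (simp add: comp_def)
  then have "inj_on \<mu> {1..k}" by (rule inj_on_imageI2)
  then show ?thesis using that \<mu>k image by blast
qed

lemma ex_eigenvalue_certificate:
  assumes A: "A \<in> carrier_mat n n" and herm: "hermitian_mat A"
    and l: "eigenvalue A l" and simple: "Polynomial.order l (char_poly A) = 1"
    and card: "card {m. eigenvalue A m} = k"
  shows "\<exists>\<mu>. eigenvalue_certificate A n k \<mu>"
proof -
  obtain d P Q where sim: "similar_mat_wit A (mat_diag n d) P Q"
    using hermitian_mat_diagonalizable[OF A herm] by blast
  obtain j0 where j0: "j0 < n" "d j0 = l" and unique: "\<And>j. j < n \<Longrightarrow> d j = l \<Longrightarrow> j = j0"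
    using simple_eigenvalue_mat_diag_index[OF sim simple] by blast
  have real: "{m. eigenvalue A m} \<subseteq> \<real>" using hermitian_mat_eigenvalue_real[OF A herm] by blast
  obtain \<mu> where inj: "inj_on \<mu> {1..k}" and \<mu>k: "complex_of_real (\<mu> k) = l"
    and others: "(\<lambda>i. complex_of_real (\<mu> i)) ` {1..k-1} = {m. eigenvalue A m} - {l}"
    using ex_real_enumeration_with_last[OF finite_eigenvalues[OF A] card _ real] l by blast
  have sing: "\<forall>i \<in> {1..k-1}. det (A - complex_of_real (\<mu> i) \<cdot>\<^sub>m 1\<^sub>m n) = 0"
    using others unfolding eigenvalue_det[OF A] char_matrix_eq_shift[OF A] by blast
  have shifts: "d j \<in> (\<lambda>i. complex_of_real (\<mu> i)) ` set [1..<k]" if j: "j < n" "j \<noteq> j0" for j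
  proof -
    have "eigenvalue A (d j)"
      using similar_mat_diag_col_eigenvector[OF A sim j(1)] unfolding eigenvalue_def by blast
    moreover have "set [1..<k] = {1..k-1}" by auto
    ultimately show ?thesis using others unique[OF j(1)] j(2) by auto
  qed
  have "complex_of_real (\<Prod>i = 1..k-1. \<mu> k - \<mu> i) = (\<Prod>i \<leftarrow> [1..<k]. l - complex_of_real (\<mu> i))"
    unfolding prod_list_upt_eq_prod of_real_prod \<mu>k[symmetric] by simp
  moreover have "l \<in> \<real>" using real l by blast
  ultimately have "mat_list_prod n (map (\<lambda>i. A - complex_of_real (\<mu> i) \<cdot>\<^sub>m 1\<^sub>m n) [1..<k])
      = (complex_of_real (\<Prod>i = 1..k-1. \<mu> k - \<mu> i) / (col P j0 \<bullet>c col P j0)) \<cdot>\<^sub>m outer_adj (col P j0)"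
    using mat_list_prod_shifts_eq_outer_adj[OF A herm sim j0 unique _ shifts] by simp
  moreover have "col P j0 \<in> carrier_vec n" "col P j0 \<noteq> 0\<^sub>v n" "A *\<^sub>v col P j0 = l \<cdot>\<^sub>v col P j0"
    using similar_mat_diag_col_eigenvector[OF A sim j0(1)] j0 A unfolding eigenvector_def by auto
  ultimately show ?thesis
    unfolding eigenvalue_certificate_def using inj sing \<mu>k by blast
qed

theorem lemma4p1:
  fixes H :: "complex mat" and n k :: nat
  assumes "psd_mat H n"
    and "least_eigenvalue_simple H"
    and "2 \<le> k" and "k \<le> n"
  shows "(card {m. eigenvalue H m} = k \<longleftrightarrow>
          (\<exists>\<mu> :: nat \<Rightarrow> real. inj_on \<mu> {1..k} \<and>
             (\<forall>i \<in> {1..k-1}. det (H - complex_of_real (\<mu> i) \<cdot>\<^sub>m 1\<^sub>m n) = 0) \<and>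
             (\<exists>\<alpha> \<in> carrier_vec n. \<alpha> \<noteq> 0\<^sub>v n \<and>
                mat_list_prod n (map (\<lambda>i. H - complex_of_real (\<mu> i) \<cdot>\<^sub>m 1\<^sub>m n) [1..<k])
                  = (complex_of_real (\<Prod>i = 1..k-1. \<mu> k - \<mu> i) / (\<alpha> \<bullet>c \<alpha>)) \<cdot>\<^sub>m outer_adj \<alpha>
                \<and> H *\<^sub>v \<alpha> = complex_of_real (\<mu> k) \<cdot>\<^sub>v \<alpha>)))
     \<and> (\<forall>\<mu> :: nat \<Rightarrow> real. (inj_on \<mu> {1..k} \<and>
             (\<forall>i \<in> {1..k-1}. det (H - complex_of_real (\<mu> i) \<cdot>\<^sub>m 1\<^sub>m n) = 0) \<and>
             (\<exists>\<alpha> \<in> carrier_vec n. \<alpha> \<noteq> 0\<^sub>v n \<and>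
                mat_list_prod n (map (\<lambda>i. H - complex_of_real (\<mu> i) \<cdot>\<^sub>m 1\<^sub>m n) [1..<k])
                  = (complex_of_real (\<Prod>i = 1..k-1. \<mu> k - \<mu> i) / (\<alpha> \<bullet>c \<alpha>)) \<cdot>\<^sub>m outer_adj \<alpha>
                \<and> H *\<^sub>v \<alpha> = complex_of_real (\<mu> k) \<cdot>\<^sub>v \<alpha>))
          \<longrightarrow> {m. eigenvalue H m} = (\<lambda>i. complex_of_real (\<mu> i)) ` {1..k})"
proof -
  have A: "H \<in> carrier_mat n n" and herm: "hermitian_mat H"
    using assms(1) unfolding psd_mat_def by (auto intro: hermitian_mat_if_adjoint_eq)
  obtain l where l: "eigenvalue H l" and simple: "Polynomial.order l (char_poly H) = 1"
    using assms(2) unfolding least_eigenvalue_simple_def simple_eigenvalue_def by blast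
  have k: "1 \<le> k" using assms(3) by simp
  have "card {m. eigenvalue H m} = k \<longleftrightarrow> (\<exists>\<mu>. eigenvalue_certificate H n k \<mu>)"
    using ex_eigenvalue_certificate[OF A herm l simple] card_eigenvalues_if_certificate[OF A herm _ k]
    by blast
  moreover have "eigenvalue_certificate H n k \<mu> \<longrightarrow> {m. eigenvalue H m} = (\<lambda>i. complex_of_real (\<mu> i)) ` {1..k}"
    for \<mu> using eigenvalues_eq_if_certificate[OF A herm _ k] by blast
  ultimately show ?thesis unfolding eigenvalue_certificate_def[symmetric] by blast
qed

end
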